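(* Let $K, T \geq 1$ be integers, let $r_{tk}$ ($t = 1,\ldots,T$, $k = 1,\ldots,K$) be real numbers (the return of security $k$ at time $t$), and let $H_1,\ldots,H_K > 0$ be thresholds. For each security $k$ and time $t$, classify the observation $r_{tk}$ as $U$ (up) if $r_{tk} \geq H_k$, as $D$ (down) if $r_{tk} \leq -H_k$, and as $N$ (neutral) if $-H_k < r_{tk} < H_k$. For $p,q \in \{U,N,D\}$ and securities $i,j$, let $n_{ij}^{pq}$ be the number of times $t \in \{1,\ldots,T\}$ at which $r_{ti}$ is in category $p$ and $r_{tj}$ is in category $q$. Assume that $n_{ij}^{NN} < T$ for all $i,j \in \{1,\ldots,K\}$. Define the $K \times K$ matrix $G^{(2)}$ with entries $$g_{ij}^{(2)} = \frac{n_{ij}^{UU} + n_{ij}^{DD} - n_{ij}^{UD} - n_{ij}^{DU}}{T - n_{ij}^{NN}}.$$ Then $G^{(2)}$ is positive semidefinite.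
   Context: In the paper the thresholds are $H_k = c\,\sigma_k$, where $c>0$ is a fixed fraction (e.g. $1/2$) and $\sigma_k$ is the sample standard deviation of the returns of security $k$; the result only uses that the thresholds are positive. The matrix $G^{(2)}$ is called Gerber Statistic 2. *)

theory Defs
  imports Main "HOL.Real"
begin

datatype cat = U | N | D

definition classify :: "real \<Rightarrow> real \<Rightarrow> cat" where
  "classify h x = (if x \<ge> h then U else if x \<le> - h then D else N)"

definition ncount :: "nat \<Rightarrow> (nat \<Rightarrow> nat \<Rightarrow> real) \<Rightarrow> (nat \<Rightarrow> real)
    \<Rightarrow> cat \<Rightarrow> cat \<Rightarrow> nat \<Rightarrow> nat \<Rightarrow> nat" where
  "ncount T r H p q i j =
     card {t \<in> {1..T}. classify (H i) (r t i) = p \<and> classify (H j) (r t j) = q}"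

definition gerber2 :: "nat \<Rightarrow> (nat \<Rightarrow> nat \<Rightarrow> real) \<Rightarrow> (nat \<Rightarrow> real) \<Rightarrow> nat \<Rightarrow> nat \<Rightarrow> real" where
  "gerber2 T r H i j =
     (real (ncount T r H U U i j) + real (ncount T r H D D i j)
      - real (ncount T r H U D i j) - real (ncount T r H D U i j))
     / (real T - real (ncount T r H N N i j))"

definition psd :: "nat \<Rightarrow> (nat \<Rightarrow> nat \<Rightarrow> real) \<Rightarrow> bool" where
  "psd K A \<longleftrightarrow> (\<forall>i\<in>{1..K}. \<forall>j\<in>{1..K}. A i j = A j i) \<and>
     (\<forall>x :: nat \<Rightarrow> real. (\<Sum>i=1..K. \<Sum>j=1..K. x i * A i j * x j) \<ge> 0)"

end

theory Submission
  imports Defs "HOL-Analysis.Analysis"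
begin

text \<open>Encode the categories as signs \<open>s\<^sub>t\<^sub>k \<in> {1, 0, -1}\<close>. Then the numerator of \<open>g\<^sub>i\<^sub>j\<close> is
  \<open>\<Sum>\<^sub>t s\<^sub>t\<^sub>i s\<^sub>t\<^sub>j\<close> and the denominator is \<open>|A\<^sub>i \<union> A\<^sub>j|\<close>, where \<open>A\<^sub>k\<close> is the set of times at which
  security \<open>k\<close> is not neutral. Splitting the quadratic form over \<open>t\<close>, only securities with
  \<open>t \<in> A\<^sub>k\<close> contribute to the \<open>t\<close>-th summand, and for them
  \<open>1 / |A\<^sub>i \<union> A\<^sub>j| = \<integral>\<^sub>0\<^sup>1 y^|(A\<^sub>i - {t}) \<union> (A\<^sub>j - {t})| dy\<close>.
  For fixed \<open>y \<in> [0,1]\<close> the kernel \<open>y^|B\<^sub>i \<union> B\<^sub>j|\<close> is positive semidefinite, being the Schur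
  product over the points \<open>u\<close> of the kernels \<open>y + (1 - y) [u \<notin> B\<^sub>i] [u \<notin> B\<^sub>j]\<close>.\<close>

lemma quadratic_form_power_card_union_nonneg:
  fixes y :: real and B :: "'i \<Rightarrow> 'a set"
  assumes "0 \<le> y" "y \<le> 1" and "finite V"
  shows "0 \<le> (\<Sum>i\<in>I. \<Sum>j\<in>I. x i * x j * y ^ card ((B i \<union> B j) \<inter> V))"
  using \<open>finite V\<close>
proof (induction V arbitrary: x rule: finite_induct)
  case empty
  have "(\<Sum>i\<in>I. \<Sum>j\<in>I. x i * x j * y ^ card ((B i \<union> B j) \<inter> {})) = (\<Sum>i\<in>I. x i)\<^sup>2"
    by (simp add: power2_eq_square sum_distrib_left sum_distrib_right mult.commute)
  then show ?case by simp
next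
  case (insert u V)
  define c where "c i = (if u \<in> B i then 0 else (1::real))" for i
  define Q where "Q z = (\<Sum>i\<in>I. \<Sum>j\<in>I. z i * z j * y ^ card ((B i \<union> B j) \<inter> V))" for z
  have split: "y ^ card ((B i \<union> B j) \<inter> insert u V)
      = (y + (1 - y) * c i * c j) * y ^ card ((B i \<union> B j) \<inter> V)" for i j
  proof (cases "u \<in> B i \<union> B j")
    case True
    then have "card ((B i \<union> B j) \<inter> insert u V) = Suc (card ((B i \<union> B j) \<inter> V))"
      using insert by (simp add: Int_insert_right)
    moreover have "c i * c j = 0" using True c_def by auto
    ultimately show ?thesis by simp
  next
    case False
    then show ?thesis by (simp add: c_def Int_insert_right)
  qed
  have Q_nonneg: "0 \<le> Q x" "0 \<le> Q (\<lambda>i. x i * c i)"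
    unfolding Q_def by (fact insert.IH)+
  have "(\<Sum>i\<in>I. \<Sum>j\<in>I. x i * x j * y ^ card ((B i \<union> B j) \<inter> insert u V))
      = (\<Sum>i\<in>I. \<Sum>j\<in>I. y * (x i * x j * y ^ card ((B i \<union> B j) \<inter> V))
          + (1 - y) * ((x i * c i) * (x j * c j) * y ^ card ((B i \<union> B j) \<inter> V)))"
    unfolding split by (intro sum.cong refl) (simp add: algebra_simps)
  also have "\<dots> = y * Q x + (1 - y) * Q (\<lambda>i. x i * c i)"
    unfolding Q_def by (simp add: sum.distrib sum_distrib_left)
  finally show ?case using Q_nonneg assms(1,2) by simp
qed

lemma has_integral_power_unit_interval:
  "((\<lambda>y::real. y ^ n) has_integral 1 / real (Suc n)) {0..1}"
proof -
  have "((\<lambda>y::real. y ^ Suc n / real (Suc n)) has_real_derivative y ^ n) (at y within {0..1})" for y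
    by (auto intro!: derivative_eq_intros) (cases n, auto simp: field_simps)
  then have "((\<lambda>y::real. y ^ n) has_integral 1 ^ Suc n / real (Suc n) - 0 ^ Suc n / real (Suc n)) {0..1}"
    by (intro fundamental_theorem_of_calculus) (auto simp: has_real_derivative_iff_has_vector_derivative)
  then show ?thesis by simp
qed

lemma quadratic_form_inverse_card_union_nonneg:
  fixes w :: "'i \<Rightarrow> real" and A :: "'i \<Rightarrow> 'a set"
  assumes "finite I" and "\<And>i. i \<in> I \<Longrightarrow> finite (A i)"
    and "\<And>i. i \<in> I \<Longrightarrow> w i \<noteq> 0 \<Longrightarrow> t \<in> A i"
  shows "0 \<le> (\<Sum>i\<in>I. \<Sum>j\<in>I. w i * w j / real (card (A i \<union> A j)))"
proof -
  define V where "V = \<Union> (A ` I)"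
  define B where "B i = A i - {t}" for i
  have term_integral: "((\<lambda>y. w i * w j * y ^ card ((B i \<union> B j) \<inter> V)) has_integral
      w i * w j / real (card (A i \<union> A j))) {0..1}" if "i \<in> I" "j \<in> I" for i j
  proof (cases "w i * w j = 0")
    case True
    then show ?thesis by (simp only: True mult_zero_left div_0 has_integral_0)
  next
    case False
    then have "t \<in> A i" using assms(3) \<open>i \<in> I\<close> by simp
    moreover have "(B i \<union> B j) \<inter> V = (A i \<union> A j) - {t}"
      using that unfolding B_def V_def by auto
    ultimately have "card (A i \<union> A j) = Suc (card ((B i \<union> B j) \<inter> V))"
      using assms(2) that by (metis Un_iff card_Suc_Diff1 finite_Un)
    then show ?thesis
      using has_integral_mult_right[OF has_integral_power_unit_interval] by simp
  qed
  have integral: "((\<lambda>y. \<Sum>i\<in>I. \<Sum>j\<in>I. w i * w j * y ^ card ((B i \<union> B j) \<inter> V)) has_integral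
      (\<Sum>i\<in>I. \<Sum>j\<in>I. w i * w j / real (card (A i \<union> A j)))) {0..1}"
    by (intro has_integral_sum term_integral \<open>finite I\<close>)
  have "finite V" using assms(1,2) unfolding V_def by blast
  show ?thesis
  proof (rule has_integral_nonneg[OF integral])
    fix y :: real assume "y \<in> {0..1}"
    then show "0 \<le> (\<Sum>i\<in>I. \<Sum>j\<in>I. w i * w j * y ^ card ((B i \<union> B j) \<inter> V))"
      using \<open>finite V\<close> by (intro quadratic_form_power_card_union_nonneg) auto
  qed
qed

lemma quadratic_form_normalized_comovement_nonneg:
  fixes s :: "'t \<Rightarrow> 'i \<Rightarrow> real" and x :: "'i \<Rightarrow> real"
  assumes "finite S" and "finite I"
  defines "A k \<equiv> {t \<in> S. s t k \<noteq> 0}"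
  shows "0 \<le> (\<Sum>i\<in>I. \<Sum>j\<in>I. x i * ((\<Sum>t\<in>S. s t i * s t j) / real (card (A i \<union> A j))) * x j)"
proof -
  have "(\<Sum>i\<in>I. \<Sum>j\<in>I. x i * ((\<Sum>t\<in>S. s t i * s t j) / real (card (A i \<union> A j))) * x j)
      = (\<Sum>i\<in>I. \<Sum>j\<in>I. \<Sum>t\<in>S. (x i * s t i) * (x j * s t j) / real (card (A i \<union> A j)))"
    by (simp add: sum_divide_distrib sum_distrib_left sum_distrib_right mult_ac)
  also have "\<dots> = (\<Sum>t\<in>S. \<Sum>i\<in>I. \<Sum>j\<in>I. (x i * s t i) * (x j * s t j) / real (card (A i \<union> A j)))"
    by (simp only: sum.swap[where A = I and B = S])
  also have "0 \<le> \<dots>"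
  proof (rule sum_nonneg)
    fix t assume "t \<in> S"
    then show "0 \<le> (\<Sum>i\<in>I. \<Sum>j\<in>I. (x i * s t i) * (x j * s t j) / real (card (A i \<union> A j)))"
      by (intro quadratic_form_inverse_card_union_nonneg[where t = t]) (simp_all add: A_def assms(1,2))
  qed
  finally show ?thesis .
qed

definition sign_of :: "cat \<Rightarrow> real" where
  "sign_of c = (case c of U \<Rightarrow> 1 | N \<Rightarrow> 0 | D \<Rightarrow> -1)"

lemma sign_of_eq_0_iff [simp]: "sign_of c = 0 \<longleftrightarrow> c = N"
  by (cases c) (simp_all add: sign_of_def)

lemma gerber2_eq_normalized_comovement:
  fixes T :: nat and r :: "nat \<Rightarrow> nat \<Rightarrow> real" and H :: "nat \<Rightarrow> real"
  defines "s t k \<equiv> sign_of (classify (H k) (r t k))"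
    and "A k \<equiv> {t \<in> {1..T}. classify (H k) (r t k) \<noteq> N}"
  shows "gerber2 T r H i j = (\<Sum>t\<in>{1..T}. s t i * s t j) / real (card (A i \<union> A j))"
proof -
  define cl where "cl t k = classify (H k) (r t k)" for t k
  have real_card_eq_sum: "real (card {t \<in> {1..T}. P t}) = (\<Sum>t\<in>{1..T}. if P t then 1 else 0)" for P
    by (simp add: sum.If_cases Int_def)
  have "real (ncount T r H U U i j) + real (ncount T r H D D i j)
      - real (ncount T r H U D i j) - real (ncount T r H D U i j)
      = (\<Sum>t\<in>{1..T}. (if cl t i = U \<and> cl t j = U then 1 else 0) + (if cl t i = D \<and> cl t j = D then 1 else 0)
          - (if cl t i = U \<and> cl t j = D then 1 else 0) - (if cl t i = D \<and> cl t j = U then 1 else 0))"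
    unfolding ncount_def cl_def real_card_eq_sum
    by (simp add: sum.distrib sum_subtractf)
  also have "\<dots> = (\<Sum>t\<in>{1..T}. s t i * s t j)"
    by (intro sum.cong) (auto simp: s_def cl_def sign_of_def split: cat.splits)
  finally have numerator: "real (ncount T r H U U i j) + real (ncount T r H D D i j)
      - real (ncount T r H U D i j) - real (ncount T r H D U i j) = (\<Sum>t\<in>{1..T}. s t i * s t j)" .
  have card_complement: "card ({1..T} - {t \<in> {1..T}. P t}) = T - card {t \<in> {1..T}. P t}" for P
    by (subst card_Diff_subset) auto
  have "A i \<union> A j = {1..T} - {t \<in> {1..T}. cl t i = N \<and> cl t j = N}"
    unfolding A_def cl_def by auto
  then have "card (A i \<union> A j) = T - ncount T r H N N i j"
    unfolding ncount_def cl_def by (simp only: card_complement)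
  moreover have "ncount T r H N N i j \<le> T"
    unfolding ncount_def using card_mono[OF finite_atLeastAtMost Collect_subset]
    by (metis card_atLeastAtMost diff_Suc_1)
  ultimately have denominator: "real T - real (ncount T r H N N i j) = real (card (A i \<union> A j))"
    by simp
  show ?thesis
    unfolding gerber2_def numerator denominator ..
qed

theorem proposition2:
  fixes K T :: nat and r :: "nat \<Rightarrow> nat \<Rightarrow> real" and H :: "nat \<Rightarrow> real"
  assumes "K \<ge> 1" and "T \<ge> 1"
    and "\<And>k. k \<in> {1..K} \<Longrightarrow> H k > 0"
    and "\<And>i j. i \<in> {1..K} \<Longrightarrow> j \<in> {1..K} \<Longrightarrow> ncount T r H N N i j < T"
  shows "psd K (gerber2 T r H)"
proof -
  define s where "s t k = sign_of (classify (H k) (r t k))" for t k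
  define A where "A k = {t \<in> {1..T}. s t k \<noteq> 0}" for k
  have gerber2_eq: "gerber2 T r H i j = (\<Sum>t\<in>{1..T}. s t i * s t j) / real (card (A i \<union> A j))"
    for i j unfolding s_def A_def sign_of_eq_0_iff by (rule gerber2_eq_normalized_comovement)
  have "gerber2 T r H i j = gerber2 T r H j i" for i j
    unfolding gerber2_eq by (simp add: Un_commute mult.commute)
  moreover have "0 \<le> (\<Sum>i=1..K. \<Sum>j=1..K. x i * gerber2 T r H i j * x j)" for x
    unfolding gerber2_eq A_def by (intro quadratic_form_normalized_comovement_nonneg) simp_all
  ultimately show ?thesis unfolding psd_def by blast
qed

end
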